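(* There exist an environment $E$ and a total preorder $\succeq$ on $\Pi^E$ such that $\succeq\in\mathrm{Ord}_{\mathrm{LAR}}(E)$ but $\succeq\notin\mathrm{Ord}_{\mathrm{ONMR}}(E)$.
   Context: An environment is a tuple $E=(\mathcal S,\mathcal A,\mathcal T,\mathcal I)$ where $\mathcal S,\mathcal A$ are finite nonempty sets, $\mathcal T:\mathcal S\times\mathcal A\to\Delta(\mathcal S)$ and $\mathcal I\in\Delta(\mathcal S)$. A policy is a map $\pi:\mathcal S\to\Delta(\mathcal A)$ (stationary, possibly stochastic); $\Pi^E$ denotes the set of all policies. A trajectory $\xi=(s_0,a_0,s_1,a_1,\dots)$ is generated under $\pi$ by $s_0\sim\mathcal I$, $a_t\sim\pi(s_t)$, $s_{t+1}\sim\mathcal T(s_t,a_t)$; $\mathbb E^\pi_\xi$ denotes expectation under this distribution. An objective-specification formalism $X$ assigns to each environment $E$ a set of objective specifications, each inducing a total preorder $\succeq$ on $\Pi^E$; $\mathrm{Ord}_X(E)$ is the set of total preorders so induced. A specification defining a scalar $J:\Pi^E\to\mathbb R$ induces $\pi_1\succeq\pi_2\iff J(\pi_1)\ge J(\pi_2)$. LAR: specification $(\mathcal R)$, $\mathcal R:\mathcal S\times\mathcal A\times\mathcal S\to\mathbb R$, $J(\pi)=\lim_{N\to\infty}\frac1N\mathbb E^\pi_\xi[\sum_{t=0}^{N-1}\mathcal R(s_t,a_t,s_{t+1})]$. ONMR: specification $(\mathcal R,f,\gamma)$ with $\mathcal R:\mathcal S\times\mathcal A\times\mathcal S\to\mathbb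 R$, $f:\mathbb R\to\mathbb R$, $\gamma\in[0,1)$; $J(\pi)=f\big(\mathbb E^\pi_\xi[\sum_{t=0}^\infty\gamma^t\mathcal R(s_t,a_t,s_{t+1})]\big)$. *)

theory Defs
  imports "HOL-Probability.Probability"
begin

text \<open>Environments with states and actions drawn from nat (finite subsets);
  this covers every finite environment up to renaming.\<close>

record env =
  St :: "nat set"
  Ac :: "nat set"
  Tr :: "nat \<Rightarrow> nat \<Rightarrow> nat pmf"
  In :: "nat pmf"

definition valid_env :: "env \<Rightarrow> bool" where
  "valid_env E \<longleftrightarrow> finite (St E) \<and> St E \<noteq> {} \<and> finite (Ac E) \<and> Ac E \<noteq> {}
     \<and> (\<forall>s\<in>St E. \<forall>a\<in>Ac E. set_pmf (Tr E s a) \<subseteq> St E)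
     \<and> set_pmf (In E) \<subseteq> St E"

text \<open>Stationary stochastic policies S -> Delta(A); values outside S are fixed
  to a dummy value so that policies correspond one-to-one to maps on S.\<close>
definition policies :: "env \<Rightarrow> (nat \<Rightarrow> nat pmf) set" where
  "policies E = {\<pi>. (\<forall>s\<in>St E. set_pmf (\<pi> s) \<subseteq> Ac E) \<and> (\<forall>s. s \<notin> St E \<longrightarrow> \<pi> s = return_pmf 0)}"

fun traj :: "env \<Rightarrow> (nat \<Rightarrow> nat pmf) \<Rightarrow> nat \<Rightarrow> ((nat \<times> nat \<times> nat) list \<times> nat) pmf" where
  "traj E \<pi> 0 = map_pmf (\<lambda>s. ([], s)) (In E)"
| "traj E \<pi> (Suc n) = bind_pmf (traj E \<pi> n) (\<lambda>(h, s).
      bind_pmf (\<pi> s) (\<lambda>a. map_pmf (\<lambda>s'. (h @ [(s, a, s')], s')) (Tr E s a)))"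

definition disc_ret :: "env \<Rightarrow> (nat \<Rightarrow> nat pmf) \<Rightarrow> (nat \<Rightarrow> nat \<Rightarrow> nat \<Rightarrow> real) \<Rightarrow> real \<Rightarrow> nat \<Rightarrow> real" where
  "disc_ret E \<pi> R \<gamma> N = measure_pmf.expectation (traj E \<pi> N)
     (\<lambda>(h, s). \<Sum>t<length h. \<gamma> ^ t * (case h ! t of (s0, a, s1) \<Rightarrow> R s0 a s1))"

definition J_LAR :: "env \<Rightarrow> (nat \<Rightarrow> nat \<Rightarrow> nat \<Rightarrow> real) \<Rightarrow> (nat \<Rightarrow> nat pmf) \<Rightarrow> real" where
  "J_LAR E R \<pi> = lim (\<lambda>N. disc_ret E \<pi> R 1 N / real N)"

text \<open>ONMR objective: f(E[sum_{t=0}^\<infinity> gamma^t R(s_t,a_t,s_{t+1})]); the expectation of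
  the (bounded) infinite discounted sum is the limit of the expectations of the
  partial sums (dominated convergence).\<close>
definition J_ONMR :: "env \<Rightarrow> (nat \<Rightarrow> nat \<Rightarrow> nat \<Rightarrow> real) \<Rightarrow> (real \<Rightarrow> real) \<Rightarrow> real
     \<Rightarrow> (nat \<Rightarrow> nat pmf) \<Rightarrow> real" where
  "J_ONMR E R f \<gamma> \<pi> = f (lim (\<lambda>N. disc_ret E \<pi> R \<gamma> N))"

definition induced_ord :: "env \<Rightarrow> ((nat \<Rightarrow> nat pmf) \<Rightarrow> real) \<Rightarrow> (nat \<Rightarrow> nat pmf) rel" where
  "induced_ord E J = {(\<pi>1, \<pi>2). \<pi>1 \<in> policies E \<and> \<pi>2 \<in> policies E \<and> J \<pi>1 \<ge> J \<pi>2}"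

definition Ord_LAR :: "env \<Rightarrow> (nat \<Rightarrow> nat pmf) rel set" where
  "Ord_LAR E = {induced_ord E (J_LAR E R) | R. True}"

definition Ord_ONMR :: "env \<Rightarrow> (nat \<Rightarrow> nat pmf) rel set" where
  "Ord_ONMR E = {induced_ord E (J_ONMR E R f \<gamma>) | R f \<gamma>. 0 \<le> \<gamma> \<and> \<gamma> < 1}"

end

theory Submission
  imports Defs
begin

text \<open>Take two states: in state 0, action 0 stays put and action 1 moves to the absorbing
  state 1; reward 1 is paid for action 1 in state 1. A policy leaving state 0 with probability
  p and playing action 1 in state 1 with probability q then has long-run average reward q if
  p > 0 and 0 if p = 0. Under any discounted reward its expected return has the form
  c + w(p) g(q), where w(p) = p / (1 - \<gamma> + \<gamma> p) maps (0,1] onto (0,1] and g is affine.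
  If g vanishes at some q in [1/2,1], the policies (1,q) and (0,0) tie under every ONMR
  objective but not under LAR. Otherwise g(1/2) and g(1) have the same sign, and shrinking
  the larger one by a suitable w(p) produces a tie between policies of average reward 1/2 and 1.\<close>

lemma expectation_bind_pmf_finite:
  fixes h :: "'b \<Rightarrow> real"
  assumes "finite (set_pmf p)" "\<And>x. x \<in> set_pmf p \<Longrightarrow> finite (set_pmf (f x))"
  shows "measure_pmf.expectation (bind_pmf p f) h
       = measure_pmf.expectation p (\<lambda>x. measure_pmf.expectation (f x) h)"
  using assms by (simp add: pmf_expectation_bind[of "set_pmf p"] integral_measure_pmf[of "set_pmf p"])

lemma expectation_pmf_cong:
  fixes f g :: "'a \<Rightarrow> real"
  assumes "\<And>x. x \<in> set_pmf p \<Longrightarrow> f x = g x"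
  shows "measure_pmf.expectation p f = measure_pmf.expectation p g"
  using assms by (intro integral_cong_AE) (auto simp: AE_measure_pmf_iff)

definition finitely_branching :: "env \<Rightarrow> (nat \<Rightarrow> nat pmf) \<Rightarrow> bool" where
  "finitely_branching E \<pi> \<longleftrightarrow> finite (set_pmf (In E)) \<and> (\<forall>s. finite (set_pmf (\<pi> s)))
     \<and> (\<forall>s a. finite (set_pmf (Tr E s a)))"

lemma length_traj: "x \<in> set_pmf (traj E \<pi> n) \<Longrightarrow> length (fst x) = n"
  by (induction n arbitrary: x) (auto simp: split_beta)

lemma finite_set_pmf_traj:
  assumes "finitely_branching E \<pi>"
  shows "finite (set_pmf (traj E \<pi> n))"
  using assms by (induction n) (auto simp: finitely_branching_def split_beta)

lemma expectation_traj_Suc: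
  fixes G :: "(nat \<times> nat \<times> nat) list \<times> nat \<Rightarrow> real"
  assumes fb: "finitely_branching E \<pi>"
  shows "measure_pmf.expectation (traj E \<pi> (Suc n)) G =
    measure_pmf.expectation (traj E \<pi> n) (\<lambda>(h, s). measure_pmf.expectation (\<pi> s)
       (\<lambda>a. measure_pmf.expectation (Tr E s a) (\<lambda>s'. G (h @ [(s, a, s')], s'))))"
proof -
  have fin: "\<forall>s. finite (set_pmf (\<pi> s))" "\<forall>s a. finite (set_pmf (Tr E s a))"
    using fb by (auto simp: finitely_branching_def)
  show ?thesis
    unfolding traj.simps
    using finite_set_pmf_traj[OF fb] fin
    by (subst expectation_bind_pmf_finite)
       (auto simp: split_beta expectation_bind_pmf_finite intro!: Bochner_Integration.integral_cong)
qed

definition expected_reward :: "env \<Rightarrow> (nat \<Rightarrow> nat pmf) \<Rightarrow> (nat \<Rightarrow> nat \<Rightarrow> nat \<Rightarrow> real) \<Rightarrow> nat \<Rightarrow> real" where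
  "expected_reward E \<pi> R s =
     measure_pmf.expectation (\<pi> s) (\<lambda>a. measure_pmf.expectation (Tr E s a) (\<lambda>s'. R s a s'))"

lemma disc_ret_0: "disc_ret E \<pi> R \<gamma> 0 = 0"
  unfolding disc_ret_def by (simp add: split_beta)

lemma disc_ret_Suc:
  assumes fb: "finitely_branching E \<pi>"
  shows "disc_ret E \<pi> R \<gamma> (Suc n) = disc_ret E \<pi> R \<gamma> n
      + \<gamma> ^ n * measure_pmf.expectation (traj E \<pi> n) (\<lambda>x. expected_reward E \<pi> R (snd x))"
proof -
  define F where "F h = (\<Sum>t<length h. \<gamma> ^ t * (case h ! t of (s0, a, s1) \<Rightarrow> R s0 a s1))" for h
  have F_snoc: "F (h @ [(s, a, s')]) = F h + \<gamma> ^ length h * R s a s'" for h s a s'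
    unfolding F_def by (simp add: nth_append)
  have disc_ret_F: "disc_ret E \<pi> R \<gamma> m = measure_pmf.expectation (traj E \<pi> m) (\<lambda>x. F (fst x))" for m
    unfolding disc_ret_def F_def by (rule Bochner_Integration.integral_cong) (auto simp: split_beta)
  have fin: "\<forall>s. finite (set_pmf (\<pi> s))" "\<forall>s a. finite (set_pmf (Tr E s a))"
    using fb by (auto simp: finitely_branching_def)
  have "disc_ret E \<pi> R \<gamma> (Suc n) = measure_pmf.expectation (traj E \<pi> n)
          (\<lambda>x. F (fst x) + \<gamma> ^ n * expected_reward E \<pi> R (snd x))"
    unfolding disc_ret_F expectation_traj_Suc[OF fb]
    using fin length_traj[of _ E \<pi> n]
    by (intro expectation_pmf_cong)
       (auto simp: split_beta F_snoc expected_reward_def integrable_measure_pmf_finite)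
  also have "\<dots> = disc_ret E \<pi> R \<gamma> n
       + \<gamma> ^ n * measure_pmf.expectation (traj E \<pi> n) (\<lambda>x. expected_reward E \<pi> R (snd x))"
    using finite_set_pmf_traj[OF fb] by (simp add: disc_ret_F integrable_measure_pmf_finite)
  finally show ?thesis .
qed

lemma expectation_traj_Suc_state:
  fixes g :: "nat \<Rightarrow> real"
  assumes "finitely_branching E \<pi>"
  shows "measure_pmf.expectation (traj E \<pi> (Suc n)) (\<lambda>x. g (snd x))
     = measure_pmf.expectation (traj E \<pi> n) (\<lambda>x. expected_reward E \<pi> (\<lambda>s a s'. g s') (snd x))"
  unfolding expectation_traj_Suc[OF assms]
  by (rule Bochner_Integration.integral_cong) (auto simp: split_beta expected_reward_def)

lemma preorder_on_induced_ord: "preorder_on (policies E) (induced_ord E J)"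
  unfolding preorder_on_def induced_ord_def refl_on_def trans_def by auto

lemma total_on_induced_ord: "total_on (policies E) (induced_ord E J)"
  unfolding total_on_def induced_ord_def by auto

lemma induced_ord_eq_tie:
  assumes "induced_ord E J1 = induced_ord E J2" "\<pi>1 \<in> policies E" "\<pi>2 \<in> policies E"
    and "J2 \<pi>1 = J2 \<pi>2"
  shows "J1 \<pi>1 = J1 \<pi>2"
proof -
  have "(\<pi>1, \<pi>2) \<in> induced_ord E J1" "(\<pi>2, \<pi>1) \<in> induced_ord E J1"
    using assms unfolding assms(1) by (auto simp: induced_ord_def)
  then show ?thesis by (simp add: induced_ord_def)
qed

lemma IVT_sign_change:
  fixes f :: "real \<Rightarrow> real"
  assumes "a \<le> b" "continuous_on {a..b} f" "f a * f b \<le> 0"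
  obtains x where "x \<in> {a..b}" "f x = 0"
proof -
  have "f a \<le> 0 \<and> 0 \<le> f b \<or> f b \<le> 0 \<and> 0 \<le> f a"
    using assms(3) by (auto simp: mult_le_0_iff)
  then show ?thesis
    using IVT'[of f a 0 b] IVT2'[of f b 0 a] assms(1,2) that by auto
qed

lemma same_sign_ratio:
  fixes x y :: real
  assumes "x * y > 0"
  obtains t where "0 < t" "t \<le> 1" "x = t * y \<or> y = t * x"
proof (cases "\<bar>x\<bar> \<le> \<bar>y\<bar>")
  case True
  with assms show ?thesis
    by (intro that[of "x / y"]) (auto simp: zero_less_mult_iff zero_less_divide_iff abs_le_iff divide_le_eq)
next
  case False
  with assms show ?thesis
    by (intro that[of "y / x"]) (auto simp: zero_less_mult_iff zero_less_divide_iff abs_le_iff divide_le_eq)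
qed

definition trap_env :: env where
  "trap_env = \<lparr>St = {0, 1}, Ac = {0, 1},
     Tr = (\<lambda>s a. return_pmf (if s = 0 \<and> a = 0 then 0 else 1)), In = return_pmf 0\<rparr>"

definition bit_pmf :: "real \<Rightarrow> nat pmf" where
  "bit_pmf x = map_pmf (\<lambda>b. if b then 1 else 0) (bernoulli_pmf x)"

definition trap_policy :: "real \<Rightarrow> real \<Rightarrow> nat \<Rightarrow> nat pmf" where
  "trap_policy p q s = (if s = 0 then bit_pmf p else if s = 1 then bit_pmf q else return_pmf 0)"

lemma set_bit_pmf: "set_pmf (bit_pmf x) \<subseteq> {0, 1}"
  unfolding bit_pmf_def by auto

lemma expectation_bit_pmf:
  fixes k :: "nat \<Rightarrow> real"
  assumes "0 \<le> x" "x \<le> 1"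
  shows "measure_pmf.expectation (bit_pmf x) k = x * k 1 + (1 - x) * k 0"
  unfolding bit_pmf_def using assms by (simp add: mult.commute)

lemma valid_trap_env: "valid_env trap_env"
  unfolding valid_env_def trap_env_def by auto

lemma trap_policy_in_policies: "trap_policy p q \<in> policies trap_env"
  unfolding policies_def trap_env_def trap_policy_def using set_bit_pmf by auto

lemma finitely_branching_trap: "finitely_branching trap_env (trap_policy p q)"
  unfolding finitely_branching_def trap_env_def trap_policy_def
  using set_bit_pmf by (auto intro: finite_subset)

lemma expected_reward_trap:
  assumes "0 \<le> p" "p \<le> 1" "0 \<le> q" "q \<le> 1"
  shows "expected_reward trap_env (trap_policy p q) R 0 = (1 - p) * R 0 0 0 + p * R 0 1 1"
    and "expected_reward trap_env (trap_policy p q) R 1 = (1 - q) * R 1 0 1 + q * R 1 1 1"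
  using assms
  by (simp_all add: expected_reward_def trap_policy_def expectation_bit_pmf trap_env_def algebra_simps)

lemma expectation_trap_state:
  fixes g :: "nat \<Rightarrow> real"
  assumes "0 \<le> p" "p \<le> 1" "0 \<le> q" "q \<le> 1"
  shows "measure_pmf.expectation (traj trap_env (trap_policy p q) n) (\<lambda>x. g (snd x))
        = (1 - p) ^ n * g 0 + (1 - (1 - p) ^ n) * g 1"
proof (induction n arbitrary: g)
  case 0
  then show ?case by (simp add: trap_env_def)
next
  case (Suc n)
  show ?case
    unfolding expectation_traj_Suc_state[OF finitely_branching_trap] Suc.IH
    \<comment> \<open>\<open>simplified\<close> rewrites the state \<open>1::nat\<close> to the simp normal form \<open>Suc 0\<close>\<close>
    using assms by (simp add: expected_reward_trap[simplified] algebra_simps)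
qed

lemma disc_ret_trap:
  assumes "0 \<le> p" "p \<le> 1" "0 \<le> q" "q \<le> 1"
  shows "disc_ret trap_env (trap_policy p q) R \<gamma> N = (\<Sum>n<N. \<gamma> ^ n *
       ((1 - p) ^ n * ((1 - p) * R 0 0 0 + p * R 0 1 1)
        + (1 - (1 - p) ^ n) * ((1 - q) * R 1 0 1 + q * R 1 1 1)))"
  using assms
  by (induction N)
     (simp_all add: disc_ret_0 disc_ret_Suc[OF finitely_branching_trap] expectation_trap_state
       expected_reward_trap[simplified])

definition trap_reward :: "nat \<Rightarrow> nat \<Rightarrow> nat \<Rightarrow> real" where
  "trap_reward s a s' = (if s = 1 \<and> a = 1 then 1 else 0)"

lemma J_LAR_trap:
  assumes "0 \<le> p" "p \<le> 1" "0 \<le> q" "q \<le> 1"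
  shows "J_LAR trap_env trap_reward (trap_policy p q) = (if p > 0 then q else 0)"
proof -
  have disc_ret_eq: "disc_ret trap_env (trap_policy p q) trap_reward 1 N = (\<Sum>n<N. (1 - (1 - p) ^ n) * q)"
    for N by (simp add: disc_ret_trap[OF assms] trap_reward_def)
  show ?thesis
  proof (cases "p > 0")
    case False
    then show ?thesis using assms unfolding J_LAR_def disc_ret_eq by simp
  next
    case True
    have geometric: "(\<Sum>n<N. (1 - (1 - p) ^ n) * q) = real N * q - q / p * (1 - (1 - p) ^ N)" for N
    proof -
      have "(\<Sum>n<N. (1 - (1 - p) ^ n) * q) = real N * q - q * (\<Sum>n<N. (1 - p) ^ n)"
        by (simp add: algebra_simps sum_subtractf sum_distrib_left)
      also have "(\<Sum>n<N. (1 - p) ^ n) = ((1 - p) ^ N - 1) / ((1 - p) - 1)"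
        using True by (intro geometric_sum) auto
      finally show ?thesis using True by (simp add: field_simps)
    qed
    have "(\<lambda>N. q - q / p * (1 - (1 - p) ^ N) * (1 / real N)) \<longlonglongrightarrow> q - q / p * (1 - 0) * 0"
      using True assms by (intro tendsto_intros LIMSEQ_power_zero) auto
    moreover have "\<forall>\<^sub>F N in sequentially. q - q / p * (1 - (1 - p) ^ N) * (1 / real N)
               = disc_ret trap_env (trap_policy p q) trap_reward 1 N / real N"
      using eventually_gt_at_top[of "0::nat"]
      by eventually_elim (unfold disc_ret_eq geometric, use True in \<open>simp add: field_simps\<close>)
    ultimately have "(\<lambda>N. disc_ret trap_env (trap_policy p q) trap_reward 1 N / real N) \<longlonglongrightarrow> q"
      by (simp add: Lim_transform_eventually)
    then show ?thesis unfolding J_LAR_def using True by (simp add: limI)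
  qed
qed

definition reach_weight :: "real \<Rightarrow> real \<Rightarrow> real" where
  "reach_weight \<gamma> p = p / (1 - \<gamma> + \<gamma> * p)"

definition trap_gain :: "(nat \<Rightarrow> nat \<Rightarrow> nat \<Rightarrow> real) \<Rightarrow> real \<Rightarrow> real \<Rightarrow> real" where
  "trap_gain R \<gamma> q = R 0 1 1 - R 0 0 0 + \<gamma> / (1 - \<gamma>) * ((1 - q) * R 1 0 1 + q * R 1 1 1 - R 0 0 0)"

lemma discounted_value_split:
  fixes u D \<gamma> p c b r :: real
  assumes "u \<noteq> 0" "D \<noteq> 0" "D = u + \<gamma> * p"
  shows "r / u + ((1 - p) * c + p * b - r) / D = c / u + p / D * (b - c + \<gamma> / u * (r - c))"
  using assms(1,2) unfolding assms(3)[symmetric]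
  by (simp add: field_simps) (simp add: assms(3) algebra_simps)

lemma lim_disc_ret_trap:
  assumes "0 \<le> p" "p \<le> 1" "0 \<le> q" "q \<le> 1" "0 \<le> \<gamma>" "\<gamma> < 1"
  shows "lim (disc_ret trap_env (trap_policy p q) R \<gamma>)
       = R 0 0 0 / (1 - \<gamma>) + reach_weight \<gamma> p * trap_gain R \<gamma> q"
proof -
  define r0 where "r0 = (1 - p) * R 0 0 0 + p * R 0 1 1"
  define r1 where "r1 = (1 - q) * R 1 0 1 + q * R 1 1 1"
  have "\<gamma> * (1 - p) \<le> \<gamma>" using assms by (simp add: mult_left_le)
  then have "norm (\<gamma> * (1 - p)) < 1" using assms by simp
  then have "(\<lambda>n. (\<gamma> * (1 - p)) ^ n) sums (1 / (1 - \<gamma> + \<gamma> * p))"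
    using geometric_sums[of "\<gamma> * (1 - p)"] by (simp add: algebra_simps)
  moreover have "(\<lambda>n. \<gamma> ^ n) sums (1 / (1 - \<gamma>))"
    using assms by (intro geometric_sums) auto
  ultimately have "(\<lambda>n. \<gamma> ^ n * r1 + (\<gamma> * (1 - p)) ^ n * (r0 - r1)) sums
        (1 / (1 - \<gamma>) * r1 + 1 / (1 - \<gamma> + \<gamma> * p) * (r0 - r1))"
    by (intro sums_add sums_mult2)
  moreover have "disc_ret trap_env (trap_policy p q) R \<gamma>
      = (\<lambda>N. \<Sum>n<N. \<gamma> ^ n * r1 + (\<gamma> * (1 - p)) ^ n * (r0 - r1))"
    unfolding disc_ret_trap[OF assms(1-4)] r0_def[symmetric] r1_def[symmetric]
    by (intro ext sum.cong) (auto simp: power_mult_distrib[symmetric] algebra_simps)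
  ultimately have "lim (disc_ret trap_env (trap_policy p q) R \<gamma>)
      = r1 / (1 - \<gamma>) + (r0 - r1) / (1 - \<gamma> + \<gamma> * p)"
    by (simp add: sums_def limI)
  also have "\<dots> = R 0 0 0 / (1 - \<gamma>) + reach_weight \<gamma> p * trap_gain R \<gamma> q"
    unfolding reach_weight_def trap_gain_def r0_def r1_def
  proof (rule discounted_value_split)
    have "0 \<le> \<gamma> * p" using assms by simp
    then show "1 - \<gamma> + \<gamma> * p \<noteq> 0" using assms by linarith
  qed (use assms in auto)
  finally show ?thesis .
qed

lemma reach_weight_0 [simp]: "reach_weight \<gamma> 0 = 0"
  and reach_weight_1 [simp]: "reach_weight \<gamma> 1 = 1"
  by (simp_all add: reach_weight_def)

lemma reach_weight_onto:
  assumes "0 < t" "t \<le> 1" "0 \<le> \<gamma>" "\<gamma> < 1"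
  obtains p where "0 < p" "p \<le> 1" "reach_weight \<gamma> p = t"
proof
  have "\<gamma> * t \<le> \<gamma>" using assms by (simp add: mult_left_le)
  then have pos: "0 < 1 - \<gamma> * t" using assms by simp
  show "0 < t * (1 - \<gamma>) / (1 - \<gamma> * t)" using assms pos by simp
  have "t * (1 - \<gamma>) \<le> 1 - \<gamma> * t" using assms by (simp add: algebra_simps)
  then show "t * (1 - \<gamma>) / (1 - \<gamma> * t) \<le> 1" using pos by simp
  have "1 - \<gamma> + \<gamma> * (t * (1 - \<gamma>) / (1 - \<gamma> * t)) = (1 - \<gamma>) / (1 - \<gamma> * t)"
    using pos by (simp add: field_simps)
  then show "reach_weight \<gamma> (t * (1 - \<gamma>) / (1 - \<gamma> * t)) = t"
    unfolding reach_weight_def using pos assms by simp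
qed

lemma continuous_on_trap_gain: "continuous_on S (trap_gain R \<gamma>)"
  unfolding trap_gain_def by (intro continuous_intros)

lemma LAR_trap_not_ONMR: "induced_ord trap_env (J_LAR trap_env trap_reward) \<notin> Ord_ONMR trap_env"
proof
  assume "induced_ord trap_env (J_LAR trap_env trap_reward) \<in> Ord_ONMR trap_env"
  then obtain R f \<gamma> where ord_eq: "induced_ord trap_env (J_LAR trap_env trap_reward)
      = induced_ord trap_env (J_ONMR trap_env R f \<gamma>)" and \<gamma>: "0 \<le> \<gamma>" "\<gamma> < 1"
    unfolding Ord_ONMR_def by blast
  define g where "g = trap_gain R \<gamma>"
  define V where "V p q = R 0 0 0 / (1 - \<gamma>) + reach_weight \<gamma> p * g q" for p q
  have tie: "(if p1 > 0 then q1 else 0) = (if p2 > 0 then q2 else (0::real))"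
    if "V p1 q1 = V p2 q2" "p1 \<in> {0..1}" "q1 \<in> {0..1}" "p2 \<in> {0..1}" "q2 \<in> {0..1}"
    for p1 q1 p2 q2
  proof -
    have "J_ONMR trap_env R f \<gamma> (trap_policy p1 q1) = J_ONMR trap_env R f \<gamma> (trap_policy p2 q2)"
      using that \<gamma> by (simp add: J_ONMR_def lim_disc_ret_trap V_def g_def)
    then have "J_LAR trap_env trap_reward (trap_policy p1 q1) = J_LAR trap_env trap_reward (trap_policy p2 q2)"
      by (rule induced_ord_eq_tie[OF ord_eq trap_policy_in_policies trap_policy_in_policies])
    then show ?thesis using that by (simp add: J_LAR_trap)
  qed
  show False
  proof (cases "g (1/2) * g 1 > 0")
    case False
    then obtain q where q: "q \<in> {1/2..1}" "g q = 0"
      using IVT_sign_change[of "1/2" 1 g] continuous_on_trap_gain unfolding g_def by force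
    then have "V 1 q = V 0 0" by (simp add: V_def)
    then show False using tie[of 1 q 0 0] q by simp
  next
    case True
    then obtain t where t: "0 < t" "t \<le> 1" "g (1/2) = t * g 1 \<or> g 1 = t * g (1/2)"
      by (rule same_sign_ratio)
    then obtain p where p: "0 < p" "p \<le> 1" "reach_weight \<gamma> p = t"
      using \<gamma> by (metis reach_weight_onto)
    from t(3) show False
    proof
      assume "g (1/2) = t * g 1"
      then have "V p 1 = V 1 (1/2)" using p by (simp add: V_def)
      then show False using tie[of p 1 1 "1/2"] p by simp
    next
      assume "g 1 = t * g (1/2)"
      then have "V p (1/2) = V 1 1" using p by (simp add: V_def)
      then show False using tie[of p "1/2" 1 1] p by simp
    qed
  qed
qed

theorem mainTheorem12:
  shows "\<exists>E ord. valid_env E \<and> preorder_on (policies E) ord \<and> total_on (policies E) ord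
           \<and> ord \<in> Ord_LAR E \<and> ord \<notin> Ord_ONMR E"
proof (intro exI conjI)
  let ?ord = "induced_ord trap_env (J_LAR trap_env trap_reward)"
  show "valid_env trap_env" by (rule valid_trap_env)
  show "preorder_on (policies trap_env) ?ord" "total_on (policies trap_env) ?ord"
    by (rule preorder_on_induced_ord total_on_induced_ord)+
  show "?ord \<in> Ord_LAR trap_env" unfolding Ord_LAR_def by blast
  show "?ord \<notin> Ord_ONMR trap_env" by (rule LAR_trap_not_ONMR)
qed

end
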